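(* Let $\alpha_j\ge0$, $j=1,2,\dots$, and define $$A_k:=\alpha_k+\sum_{0<p<k}\ \sum_{0<i_1<\dots<i_p<k}\alpha_{i_1}\alpha_{i_2-i_1}\cdots\alpha_{i_p-i_{p-1}}\alpha_{k-i_p},\qquad k=1,2,\dots$$ Assume $A:=\sum_{j=1}^\infty\alpha_j<1$ and $\alpha_j\le c\,j^{-\gamma}$ for all $j\ge1$, for some $c>0$ and $\gamma>1$. Then there exists $C>0$ such that $A_k\le C\,k^{-\gamma}$ for all $k\ge1$. *)

theory Defs
  imports Complex_Main
begin

text \<open>Product \<alpha>_{i_1} \<alpha>_{i_2-i_1} ... \<alpha>_{k-i_p} for the index set I = {i_1 < ... < i_p}
  (with i_0 = 0 and i_{p+1} = k).\<close>
definition comp_prod :: "(nat \<Rightarrow> real) \<Rightarrow> nat \<Rightarrow> nat set \<Rightarrow> real" where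
  "comp_prod \<alpha> k I =
     (let xs = 0 # sorted_list_of_set I @ [k]
      in (\<Prod>i<length xs - 1. \<alpha> (xs ! Suc i - xs ! i)))"

definition Aseq :: "(nat \<Rightarrow> real) \<Rightarrow> nat \<Rightarrow> real" where
  "Aseq \<alpha> k = \<alpha> k +
     (\<Sum>p\<in>{0<..<k}. \<Sum>I\<in>{I. I \<subseteq> {0<..<k} \<and> card I = p}. comp_prod \<alpha> k I)"

end

theory Submission
  imports Defs "HOL-Analysis.Analysis"
begin

(* Splitting off the smallest index i_1 shows that A_k solves the renewal equation
   A_k = alpha_k + sum_{0<j<k} alpha_j A_{k-j}; summing it bounds sum_k A_k by A / (1 - A).
   For the decay, split the convolution at j = eps k.  Long jumps j > eps k have
   alpha_j <= c eps^-gamma k^-gamma and are weighted by the total mass of A.  For short jumps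
   the induction hypothesis gives A_{k-j} <= C (1 - eps)^-gamma k^-gamma, weighted by at most A.
   Choosing eps with A (1 - eps)^-gamma < 1, a large C absorbs both contributions. *)

lemma sorted_list_of_set_set_strict: "sorted_wrt (<) xs \<Longrightarrow> sorted_list_of_set (set xs) = xs"
  by (simp add: sorted_list_of_set_sort_remdups strict_sorted_iff distinct_remdups_id sorted_sort_id)

fun gap_prod :: "(nat \<Rightarrow> real) \<Rightarrow> nat list \<Rightarrow> real" where
  "gap_prod \<alpha> (a # b # xs) = \<alpha> (b - a) * gap_prod \<alpha> (b # xs)"
| "gap_prod \<alpha> _ = 1"

lemma prod_gaps_eq_gap_prod:
  "(\<Prod>i<length xs - 1. \<alpha> (xs ! Suc i - xs ! i)) = gap_prod \<alpha> xs"
proof (induction \<alpha> xs rule: gap_prod.induct)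
  case (1 \<alpha> a b xs)
  have "(\<Prod>i<length (a # b # xs) - 1. \<alpha> ((a # b # xs) ! Suc i - (a # b # xs) ! i))
      = \<alpha> (b - a) * (\<Prod>i<length (b # xs) - 1. \<alpha> ((b # xs) ! Suc i - (b # xs) ! i))"
    by (simp add: prod.lessThan_Suc_shift del: prod.lessThan_Suc)
  then show ?case using 1 by simp
qed auto

lemma gap_prod_shift: "gap_prod \<alpha> (map ((+) j) xs) = gap_prod \<alpha> xs"
  by (induction \<alpha> xs rule: gap_prod.induct) auto

lemma comp_prod_eq_gap_prod: "comp_prod \<alpha> k I = gap_prod \<alpha> (0 # sorted_list_of_set I @ [k])"
  unfolding comp_prod_def Let_def by (rule prod_gaps_eq_gap_prod)

lemma comp_prod_empty [simp]: "comp_prod \<alpha> k {} = \<alpha> k"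
  by (simp add: comp_prod_eq_gap_prod)

lemma comp_prod_insert_shift:
  assumes "finite I" "I \<subseteq> {0<..<m}" "0 < j"
  shows "comp_prod \<alpha> (j + m) (insert j ((+) j ` I)) = \<alpha> j * comp_prod \<alpha> m I"
proof -
  let ?L = "sorted_list_of_set I"
  have "sorted_wrt (<) (j # map ((+) j) ?L)"
    using assms by (auto simp: sorted_wrt_map)
  moreover have "set (j # map ((+) j) ?L) = insert j ((+) j ` I)"
    using assms(1) by simp
  ultimately have "sorted_list_of_set (insert j ((+) j ` I)) = j # map ((+) j) ?L"
    by (metis sorted_list_of_set_set_strict)
  then have "comp_prod \<alpha> (j + m) (insert j ((+) j ` I))
      = \<alpha> j * gap_prod \<alpha> (map ((+) j) (0 # ?L @ [m]))"
    by (simp add: comp_prod_eq_gap_prod)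
  then show ?thesis by (simp only: gap_prod_shift comp_prod_eq_gap_prod)
qed

lemma Aseq_eq_sum_Pow: "Aseq \<alpha> k = (\<Sum>I\<in>Pow {0<..<k}. comp_prod \<alpha> k I)"
proof -
  let ?S = "Pow {0<..<k} - {{}}"
  have card_range: "card ` ?S \<subseteq> {0<..<k}"
  proof
    fix p assume "p \<in> card ` ?S"
    then obtain I where I: "I \<subseteq> {0<..<k}" "I \<noteq> {}" "p = card I" by auto
    then have "0 < card I" using finite_subset by fastforce
    moreover have "card I \<le> card {0<..<k}" using I(1) by (intro card_mono) auto
    ultimately show "p \<in> {0<..<k}" using I(3) by auto
  qed
  have "(\<Sum>p\<in>{0<..<k}. \<Sum>I\<in>{I. I \<subseteq> {0<..<k} \<and> card I = p}. comp_prod \<alpha> k I)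
     = (\<Sum>p\<in>{0<..<k}. \<Sum>I\<in>{I \<in> ?S. card I = p}. comp_prod \<alpha> k I)"
    by (intro sum.cong refl) auto
  also have "\<dots> = (\<Sum>I\<in>?S. comp_prod \<alpha> k I)"
    by (rule sum.group[OF _ _ card_range]) auto
  finally show ?thesis
    unfolding Aseq_def by (subst sum.remove[of _ "{}"]) auto
qed

lemma image_add_image_diff:
  fixes X :: "nat set"
  assumes "\<And>x. x \<in> X \<Longrightarrow> m \<le> x"
  shows "(+) m ` (\<lambda>x. x - m) ` X = X"
proof -
  have "(+) m ` (\<lambda>x. x - m) ` X = (\<lambda>x. m + (x - m)) ` X" by (simp add: image_image)
  also have "\<dots> = X" using assms by (simp cong: image_cong)
  finally show ?thesis .
qed

lemma bij_betw_insert_shift: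
  "bij_betw (\<lambda>(j, I). insert j ((+) j ` I))
     (SIGMA j:{0<..<k::nat}. Pow {0<..<k - j}) (Pow {0<..<k} - {{}})"
proof (rule bij_betw_byWitness[where f' = "\<lambda>B. (Min B, (\<lambda>x. x - Min B) ` (B - {Min B}))"])
  have Min_insert_shift: "Min (insert j ((+) j ` I)) = j" if "I \<subseteq> {0<..<k - j}" for j I
    using that finite_subset by (intro Min_eqI) fastforce+
  have shift_Diff: "(+) j ` I - {j} = (+) j ` I" if "I \<subseteq> {0<..<k - j}" for j I
    using that by auto
  show "\<forall>a\<in>SIGMA j:{0<..<k}. Pow {0<..<k - j}.
      (\<lambda>B. (Min B, (\<lambda>x. x - Min B) ` (B - {Min B}))) ((\<lambda>(j, I). insert j ((+) j ` I)) a) = a"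
    by (auto simp: Min_insert_shift shift_Diff image_image)
  have "(+) j ` I \<subseteq> {0<..<k}" if "I \<subseteq> {0<..<k - j}" for j I
    using that by (auto simp: subset_iff)
  then show "(\<lambda>(j, I). insert j ((+) j ` I)) ` (SIGMA j:{0<..<k}. Pow {0<..<k - j})
      \<subseteq> Pow {0<..<k} - {{}}"
    by auto
next
  have Min_least: "Min B \<in> B" "\<And>x. x \<in> B \<Longrightarrow> Min B \<le> x" if "B \<in> Pow {0<..<k} - {{}}" for B
  proof -
    from that have "finite B" "B \<noteq> {}" using finite_subset by auto
    then show "Min B \<in> B" "\<And>x. x \<in> B \<Longrightarrow> Min B \<le> x" by simp_all
  qed
  show "\<forall>B\<in>Pow {0<..<k} - {{}}.
      (\<lambda>(j, I). insert j ((+) j ` I)) ((\<lambda>B. (Min B, (\<lambda>x. x - Min B) ` (B - {Min B}))) B) = B"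
  proof
    fix B assume B: "B \<in> Pow {0<..<k} - {{}}"
    have "(+) (Min B) ` (\<lambda>x. x - Min B) ` (B - {Min B}) = B - {Min B}"
      using Min_least(2)[OF B] by (intro image_add_image_diff) auto
    then show "(\<lambda>(j, I). insert j ((+) j ` I)) ((\<lambda>B. (Min B, (\<lambda>x. x - Min B) ` (B - {Min B}))) B) = B"
      using Min_least(1)[OF B] by auto
  qed
  show "(\<lambda>B. (Min B, (\<lambda>x. x - Min B) ` (B - {Min B}))) ` (Pow {0<..<k} - {{}})
          \<subseteq> (SIGMA j:{0<..<k}. Pow {0<..<k - j})"
  proof (rule image_subsetI)
    fix B assume B: "B \<in> Pow {0<..<k} - {{}}"
    have "(\<lambda>x. x - Min B) ` (B - {Min B}) \<subseteq> {0<..<k - Min B}"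
      using Min_least[OF B] B by fastforce
    then show "(Min B, (\<lambda>x. x - Min B) ` (B - {Min B})) \<in> (SIGMA j:{0<..<k}. Pow {0<..<k - j})"
      using Min_least(1)[OF B] B by blast
  qed
qed

lemma Aseq_renewal: "Aseq \<alpha> k = \<alpha> k + (\<Sum>j\<in>{0<..<k}. \<alpha> j * Aseq \<alpha> (k - j))"
proof -
  have "(\<Sum>B\<in>Pow {0<..<k} - {{}}. comp_prod \<alpha> k B)
      = (\<Sum>(j, I)\<in>(SIGMA j:{0<..<k}. Pow {0<..<k - j}). comp_prod \<alpha> k (insert j ((+) j ` I)))"
    using sum.reindex_bij_betw[OF bij_betw_insert_shift, of "comp_prod \<alpha> k"]
    by (simp add: case_prod_unfold)
  also have "\<dots> = (\<Sum>j\<in>{0<..<k}. \<Sum>I\<in>Pow {0<..<k - j}. comp_prod \<alpha> k (insert j ((+) j ` I)))"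
    by (rule sum.Sigma[symmetric]) auto
  also have "\<dots> = (\<Sum>j\<in>{0<..<k}. \<Sum>I\<in>Pow {0<..<k - j}. \<alpha> j * comp_prod \<alpha> (k - j) I)"
  proof (intro sum.cong refl)
    fix j I assume "j \<in> {0<..<k}" "I \<in> Pow {0<..<k - j}"
    then show "comp_prod \<alpha> k (insert j ((+) j ` I)) = \<alpha> j * comp_prod \<alpha> (k - j) I"
      using comp_prod_insert_shift[of I "k - j" j \<alpha>] finite_subset by auto
  qed
  also have "\<dots> = (\<Sum>j\<in>{0<..<k}. \<alpha> j * Aseq \<alpha> (k - j))"
    by (simp add: Aseq_eq_sum_Pow sum_distrib_left)
  finally show ?thesis
    unfolding Aseq_eq_sum_Pow[of \<alpha> k] by (subst sum.remove[of _ "{}"]) auto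
qed

locale renewal =
  fixes \<alpha> u :: "nat \<Rightarrow> real" and a :: real
  assumes \<alpha>_nonneg: "\<And>j. j \<ge> 1 \<Longrightarrow> 0 \<le> \<alpha> j"
    and \<alpha>_partial_sums_le: "\<And>n. (\<Sum>j\<in>{0<..n}. \<alpha> j) \<le> a"
    and a_less_1: "a < 1"
    and u_renewal: "\<And>k. u k = \<alpha> k + (\<Sum>j\<in>{0<..<k}. \<alpha> j * u (k - j))"
begin

lemma a_nonneg: "0 \<le> a"
  using \<alpha>_partial_sums_le[of 0] by simp

lemma sum_\<alpha>_le:
  assumes "J \<subseteq> {0<..<k}"
  shows "(\<Sum>j\<in>J. \<alpha> j) \<le> a"
proof -
  have "(\<Sum>j\<in>J. \<alpha> j) \<le> (\<Sum>j\<in>{0<..k}. \<alpha> j)"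
    using assms \<alpha>_nonneg by (intro sum_mono2) auto
  then show ?thesis using \<alpha>_partial_sums_le[of k] by simp
qed

lemma u_nonneg: "k \<ge> 1 \<Longrightarrow> 0 \<le> u k"
proof (induction k rule: less_induct)
  case (less k)
  then have "0 \<le> \<alpha> k + (\<Sum>j\<in>{0<..<k}. \<alpha> j * u (k - j))"
    using \<alpha>_nonneg by (intro add_nonneg_nonneg sum_nonneg mult_nonneg_nonneg) auto
  then show ?case by (simp add: u_renewal[of k])
qed

lemma u_partial_sums_eq:
  "(\<Sum>m\<in>{0<..n}. u m) = (\<Sum>j\<in>{0<..n}. \<alpha> j) + (\<Sum>j\<in>{0<..n}. \<alpha> j * (\<Sum>i\<in>{0<..n - j}. u i))"
proof -
  have "(\<Sum>m\<in>{0<..n}. \<Sum>j\<in>{0<..<m}. \<alpha> j * u (m - j))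
      = (\<Sum>m\<in>{0<..n}. \<Sum>j\<in>{j \<in> {0<..n}. j < m}. \<alpha> j * u (m - j))"
    by (intro sum.cong refl) auto
  also have "\<dots> = (\<Sum>j\<in>{0<..n}. \<Sum>m\<in>{m \<in> {0<..n}. j < m}. \<alpha> j * u (m - j))"
    by (rule sum.swap_restrict) auto
  also have "\<dots> = (\<Sum>j\<in>{0<..n}. \<alpha> j * (\<Sum>i\<in>{0<..n - j}. u i))"
  proof (intro sum.cong refl)
    fix j assume "j \<in> {0<..n}"
    have "(\<Sum>m\<in>{m \<in> {0<..n}. j < m}. u (m - j)) = (\<Sum>i\<in>{0<..n - j}. u i)"
      by (rule sum.reindex_bij_witness[where i = "\<lambda>i. i + j" and j = "\<lambda>m. m - j"]) auto
    then show "(\<Sum>m\<in>{m \<in> {0<..n}. j < m}. \<alpha> j * u (m - j)) = \<alpha> j * (\<Sum>i\<in>{0<..n - j}. u i)"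
      by (metis sum_distrib_left)
  qed
  finally show ?thesis
    by (subst sum.cong[OF refl u_renewal]) (simp add: sum.distrib)
qed

lemma u_partial_sums_le: "(\<Sum>m\<in>{0<..n}. u m) \<le> a / (1 - a)"
proof (induction n rule: less_induct)
  case (less n)
  have "(\<Sum>j\<in>{0<..n}. \<alpha> j * (\<Sum>i\<in>{0<..n - j}. u i)) \<le> (\<Sum>j\<in>{0<..n}. \<alpha> j * (a / (1 - a)))"
    using less \<alpha>_nonneg by (intro sum_mono mult_left_mono) auto
  also have "\<dots> = (\<Sum>j\<in>{0<..n}. \<alpha> j) * (a / (1 - a))"
    by (rule sum_distrib_right[symmetric])
  also have "\<dots> \<le> a * (a / (1 - a))"
    using \<alpha>_partial_sums_le[of n] a_nonneg a_less_1 by (intro mult_right_mono) auto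
  finally have "(\<Sum>m\<in>{0<..n}. u m) \<le> a + a * (a / (1 - a))"
    using u_partial_sums_eq[of n] \<alpha>_partial_sums_le[of n] by linarith
  also have "\<dots> = a / (1 - a)"
    using a_less_1 by (simp add: field_simps)
  finally show ?case .
qed

lemma sum_long_jumps_le:
  assumes "0 < \<gamma>" "0 < \<epsilon>" "0 \<le> c" "1 \<le> k"
    and bound: "\<And>j. j \<ge> 1 \<Longrightarrow> \<alpha> j \<le> c * real j powr (-\<gamma>)"
  shows "(\<Sum>j\<in>{j \<in> {0<..<k}. \<epsilon> * k < j}. \<alpha> j * u (k - j))
           \<le> c * \<epsilon> powr (-\<gamma>) * (a / (1 - a)) * real k powr (-\<gamma>)"
proof -
  let ?J = "{j \<in> {0<..<k}. \<epsilon> * k < j}"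
  have "\<alpha> j \<le> c * \<epsilon> powr (-\<gamma>) * real k powr (-\<gamma>)" if "j \<in> ?J" for j
  proof -
    have "\<alpha> j \<le> c * real j powr (-\<gamma>)" using bound that by auto
    also have "\<dots> \<le> c * (\<epsilon> * k) powr (-\<gamma>)"
      using that assms by (intro mult_left_mono powr_mono2') auto
    finally show ?thesis using assms by (simp add: powr_mult mult.assoc)
  qed
  then have "(\<Sum>j\<in>?J. \<alpha> j * u (k - j)) \<le> (\<Sum>j\<in>?J. c * \<epsilon> powr (-\<gamma>) * real k powr (-\<gamma>) * u (k - j))"
    using u_nonneg by (intro sum_mono mult_right_mono) auto
  also have "\<dots> = c * \<epsilon> powr (-\<gamma>) * real k powr (-\<gamma>) * (\<Sum>j\<in>?J. u (k - j))"
    by (simp add: sum_distrib_left)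
  also have "\<dots> \<le> c * \<epsilon> powr (-\<gamma>) * real k powr (-\<gamma>) * (a / (1 - a))"
  proof (rule mult_left_mono)
    have "(\<Sum>j\<in>?J. u (k - j)) \<le> (\<Sum>j\<in>{0<..<k}. u (k - j))"
      using u_nonneg by (intro sum_mono2) auto
    also have "\<dots> = (\<Sum>m\<in>{0<..k - 1}. u m)"
      by (rule sum.reindex_bij_witness[where i = "\<lambda>m. k - m" and j = "\<lambda>j. k - j"]) auto
    also have "\<dots> \<le> a / (1 - a)" by (rule u_partial_sums_le)
    finally show "(\<Sum>j\<in>?J. u (k - j)) \<le> a / (1 - a)" .
  qed (use \<open>0 \<le> c\<close> in simp)
  finally show ?thesis by (simp only: ac_simps)
qed

lemma sum_short_jumps_le:
  assumes "0 < \<gamma>" "0 < \<epsilon>" "\<epsilon> < 1" "0 \<le> C" "1 \<le> k"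
    and IH: "\<And>m. 1 \<le> m \<Longrightarrow> m < k \<Longrightarrow> u m \<le> C * real m powr (-\<gamma>)"
  shows "(\<Sum>j\<in>{j \<in> {0<..<k}. j \<le> \<epsilon> * k}. \<alpha> j * u (k - j))
           \<le> a * (1 - \<epsilon>) powr (-\<gamma>) * C * real k powr (-\<gamma>)"
proof -
  let ?J = "{j \<in> {0<..<k}. j \<le> \<epsilon> * k}"
  have "u (k - j) \<le> (1 - \<epsilon>) powr (-\<gamma>) * C * real k powr (-\<gamma>)" if "j \<in> ?J" for j
  proof -
    have "(1 - \<epsilon>) * k \<le> real (k - j)" using that by (simp add: of_nat_diff algebra_simps)
    then have "real (k - j) powr (-\<gamma>) \<le> ((1 - \<epsilon>) * k) powr (-\<gamma>)"
      using assms by (intro powr_mono2') auto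
    then have "C * real (k - j) powr (-\<gamma>) \<le> C * ((1 - \<epsilon>) * k) powr (-\<gamma>)"
      using \<open>0 \<le> C\<close> by (rule mult_left_mono)
    moreover have "u (k - j) \<le> C * real (k - j) powr (-\<gamma>)" using that by (intro IH) auto
    ultimately show ?thesis using assms by (simp add: powr_mult ac_simps)
  qed
  then have "(\<Sum>j\<in>?J. \<alpha> j * u (k - j)) \<le> (\<Sum>j\<in>?J. \<alpha> j * ((1 - \<epsilon>) powr (-\<gamma>) * C * real k powr (-\<gamma>)))"
    using \<alpha>_nonneg by (intro sum_mono mult_left_mono) auto
  also have "\<dots> = (\<Sum>j\<in>?J. \<alpha> j) * ((1 - \<epsilon>) powr (-\<gamma>) * C * real k powr (-\<gamma>))"
    by (rule sum_distrib_right[symmetric])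
  also have "\<dots> \<le> a * ((1 - \<epsilon>) powr (-\<gamma>) * C * real k powr (-\<gamma>))"
    using sum_\<alpha>_le[of ?J k] \<open>0 \<le> C\<close> by (intro mult_right_mono) fastforce+
  finally show ?thesis by (simp only: ac_simps)
qed

lemma u_le_powr:
  assumes "0 < \<gamma>" "0 < \<epsilon>" "\<epsilon> < 1" "0 \<le> c" "0 \<le> C"
    and bound: "\<And>j. j \<ge> 1 \<Longrightarrow> \<alpha> j \<le> c * real j powr (-\<gamma>)"
    and C: "c + c * \<epsilon> powr (-\<gamma>) * (a / (1 - a)) + a * (1 - \<epsilon>) powr (-\<gamma>) * C \<le> C"
  shows "1 \<le> k \<Longrightarrow> u k \<le> C * real k powr (-\<gamma>)"
proof (induction k rule: less_induct)
  case (less k)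
  let ?small = "{j \<in> {0<..<k}. j \<le> \<epsilon> * k}" and ?large = "{j \<in> {0<..<k}. \<epsilon> * k < j}"
  have "(\<Sum>j\<in>{0<..<k}. \<alpha> j * u (k - j))
      = (\<Sum>j\<in>?small. \<alpha> j * u (k - j)) + (\<Sum>j\<in>?large. \<alpha> j * u (k - j))"
    by (subst sum.union_disjoint[symmetric]) (auto intro!: sum.cong)
  also have "\<dots> \<le> a * (1 - \<epsilon>) powr (-\<gamma>) * C * real k powr (-\<gamma>)
                  + c * \<epsilon> powr (-\<gamma>) * (a / (1 - a)) * real k powr (-\<gamma>)"
    using sum_short_jumps_le[of \<gamma> \<epsilon> C k] sum_long_jumps_le[of \<gamma> \<epsilon> c k] less assms
    by (intro add_mono) auto
  finally have "u k \<le> (c + c * \<epsilon> powr (-\<gamma>) * (a / (1 - a)) + a * (1 - \<epsilon>) powr (-\<gamma>) * C)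
                        * real k powr (-\<gamma>)"
    using u_renewal[of k] bound[of k] less.prems by (simp add: algebra_simps)
  also have "\<dots> \<le> C * real k powr (-\<gamma>)"
    using C by (intro mult_right_mono) auto
  finally show ?case .
qed

lemma u_powr_decay:
  assumes "0 < \<gamma>" "0 < c"
    and bound: "\<And>j. j \<ge> 1 \<Longrightarrow> \<alpha> j \<le> c * real j powr (-\<gamma>)"
  shows "\<exists>C>0. \<forall>k\<ge>1. u k \<le> C * real k powr (-\<gamma>)"
proof -
  define t where "t = (1 + a) / 2"
  have t: "a < t" "t < 1" using a_nonneg a_less_1 by (auto simp: t_def)
  have "0 < t" using a_nonneg t by linarith
  define \<epsilon> where "\<epsilon> = 1 - t powr (1 / \<gamma>)" \<comment> \<open>so that \<open>(1 - \<epsilon>) powr (-\<gamma>) = 1 / t\<close> with \<open>a < t < 1\<close>\<close>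
  have "t powr (1 / \<gamma>) < 1" "0 < t powr (1 / \<gamma>)"
    using powr_less_mono2[of "1 / \<gamma>" t 1] \<open>0 < t\<close> t assms by auto
  then have \<epsilon>: "0 < \<epsilon>" "\<epsilon> < 1" by (auto simp: \<epsilon>_def)
  have "(1 - \<epsilon>) powr (-\<gamma>) = 1 / t"
    using \<open>0 < t\<close> assms by (simp add: \<epsilon>_def powr_powr powr_minus divide_inverse)
  then have q: "a * (1 - \<epsilon>) powr (-\<gamma>) < 1" using t \<open>0 < t\<close> by simp
  define B where "B = c + c * \<epsilon> powr (-\<gamma>) * (a / (1 - a))"
  have "0 < B"
    unfolding B_def using assms a_nonneg a_less_1 by (intro add_pos_nonneg) auto
  define C where "C = B / (1 - a * (1 - \<epsilon>) powr (-\<gamma>))"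
  have "0 < C" using \<open>0 < B\<close> q by (simp add: C_def)
  moreover have "B + a * (1 - \<epsilon>) powr (-\<gamma>) * C \<le> C"
    using q by (simp add: C_def field_simps)
  ultimately show ?thesis
    using u_le_powr[OF \<open>0 < \<gamma>\<close> \<epsilon>, of c C] assms unfolding B_def by auto
qed

end

lemma summable_Suc_if_powr_bound:
  fixes \<alpha> :: "nat \<Rightarrow> real"
  assumes "1 < \<gamma>" "\<And>j. j \<ge> 1 \<Longrightarrow> 0 \<le> \<alpha> j" "\<And>j. j \<ge> 1 \<Longrightarrow> \<alpha> j \<le> c * real j powr (-\<gamma>)"
  shows "summable (\<lambda>j. \<alpha> (Suc j))"
proof (rule summable_comparison_test')
  have "summable (\<lambda>j. real j powr (-\<gamma>))"
    using assms(1) by (simp add: summable_real_powr_iff)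
  then show "summable (\<lambda>j. c * real (Suc j) powr (-\<gamma>))"
    using summable_Suc_iff[of "\<lambda>j. real j powr (-\<gamma>)"] by (simp add: summable_mult)
  show "norm (\<alpha> (Suc n)) \<le> c * real (Suc n) powr (-\<gamma>)" for n
    using assms(2,3)[of "Suc n"] by simp
qed

lemma sum_greaterThanAtMost_le_suminf_Suc:
  fixes \<alpha> :: "nat \<Rightarrow> real"
  assumes "summable (\<lambda>j. \<alpha> (Suc j))" "\<And>j. j \<ge> 1 \<Longrightarrow> 0 \<le> \<alpha> j"
  shows "(\<Sum>j\<in>{0<..n}. \<alpha> j) \<le> (\<Sum>j. \<alpha> (Suc j))"
proof -
  have "{0<..n} = Suc ` {..<n}" using image_Suc_lessThan by auto
  then have "(\<Sum>j\<in>{0<..n}. \<alpha> j) = (\<Sum>j<n. \<alpha> (Suc j))" by (simp add: sum.reindex)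
  also have "\<dots> \<le> (\<Sum>j. \<alpha> (Suc j))"
    using assms by (intro sum_le_suminf) auto
  finally show ?thesis .
qed

theorem lemma12:
  fixes \<alpha> :: "nat \<Rightarrow> real" and c \<gamma> :: real
  assumes nonneg: "\<And>j. j \<ge> 1 \<Longrightarrow> \<alpha> j \<ge> 0"
    and sum_lt1: "(\<Sum>j. \<alpha> (Suc j)) < 1"
    and c_pos: "c > 0" and gamma_gt1: "\<gamma> > 1"
    and bound: "\<And>j. j \<ge> 1 \<Longrightarrow> \<alpha> j \<le> c * real j powr (-\<gamma>)"
  shows "\<exists>C>0. \<forall>k\<ge>1. Aseq \<alpha> k \<le> C * real k powr (-\<gamma>)"
proof -
  have "summable (\<lambda>j. \<alpha> (Suc j))"
    using gamma_gt1 nonneg bound by (rule summable_Suc_if_powr_bound)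
  then have partial_sums_le: "(\<Sum>j\<in>{0<..n}. \<alpha> j) \<le> (\<Sum>j. \<alpha> (Suc j))" for n
    using nonneg by (rule sum_greaterThanAtMost_le_suminf_Suc)
  interpret renewal \<alpha> "Aseq \<alpha>" "\<Sum>j. \<alpha> (Suc j)"
    using nonneg partial_sums_le sum_lt1 Aseq_renewal by unfold_locales
  show ?thesis
    using u_powr_decay gamma_gt1 c_pos bound by simp
qed

end
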